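(* The code $\mathcal C_3(\mathbb D_d)$ is contained in the ternary fourth-order (extended) generalized Reed–Muller code $\mathcal R_3(4,2m)$.
   Context: Let $m\ge 2$ be an integer. For $s\in\{m,2m\}$ let $\mathrm{Tr}_s:\mathbb F_{3^s}\to\mathbb F_3$ denote the absolute trace. Vectors in $\mathbb F_3^{3^{2m}}$ are indexed by $\mathbb F_{3^{2m}}$, and a function $f:\mathbb F_{3^{2m}}\to\mathbb F_3$ is identified with $(f(t))_{t\in\mathbb F_{3^{2m}}}$. Let $\mathcal C(2m,3)=\{(\mathrm{Tr}_{2m}(at^{3^m+1}+bt)+h)_{t\in\mathbb F_{3^{2m}}}: a\in\mathbb F_{3^m}, b\in\mathbb F_{3^{2m}}, h\in\mathbb F_3\}$, let $d$ be its minimum nonzero Hamming weight, let $\mathbb D_d$ be the incidence structure on $\mathbb F_{3^{2m}}$ whose blocks are the supports of the weight-$d$ codewords, and let $\mathcal C_3(\mathbb D_d)$ be the $\mathbb F_3$-span of the incidence vectors of the blocks. Fix an $\mathbb F_3$-basis of $\mathbb F_{3^{2m}}$, identifying $\mathbb F_{3^{2m}}$ with $\mathbb F_3^{2m}$; $\mathcal R_3(r,2m)$ denotes the set of functions $\mathbb F_3^{2m}\to\mathbb F_3$ given by polynomials over $\mathbb F_3$ in $2m$ variables of total degree at most $r$ (equivalently, the extension by an overall parity check of the punctured generalized Reed–Muller code of order $r$ over $\mathbb F_3$ of length $3^{2m}-1$). *)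

theory Defs
  imports Main
begin

text \<open>We work inside a finite field 'a of order 3^(2m). The prime field F_3 is
  realised as the subfield {x. x^3 = x}, and F_{3^m} as {x. x^(3^m) = x}.
  Codewords (vectors indexed by F_{3^{2m}} over F_3) are functions 'a => 'a
  with values in F_3.\<close>

definition F3 :: "'a::field set" where
  "F3 = {x. x ^ 3 = x}"

definition subF :: "nat \<Rightarrow> 'a::field set" where
  "subF s = {x. x ^ (3 ^ s) = x}"

definition Tr :: "nat \<Rightarrow> 'a::field \<Rightarrow> 'a" where
  "Tr s x = (\<Sum>i<s. x ^ (3 ^ i))"

definition codeC :: "nat \<Rightarrow> ('a::field \<Rightarrow> 'a) set" where
  "codeC m = {(\<lambda>t. Tr (2*m) (a * t ^ (3 ^ m + 1) + b * t) + h) | a b h.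
               a \<in> subF m \<and> h \<in> F3}"

definition supp :: "('a \<Rightarrow> 'b::zero) \<Rightarrow> 'a set" where
  "supp f = {t. f t \<noteq> 0}"

definition wt :: "('a \<Rightarrow> 'b::zero) \<Rightarrow> nat" where
  "wt f = card (supp f)"

definition min_wt :: "('a \<Rightarrow> 'b::zero) set \<Rightarrow> nat" where
  "min_wt C = Min {wt c | c. c \<in> C \<and> c \<noteq> (\<lambda>_. 0)}"

definition blocks :: "('a \<Rightarrow> 'b::zero) set \<Rightarrow> 'a set set" where
  "blocks C = {supp c | c. c \<in> C \<and> wt c = min_wt C}"

definition incidence :: "'a set \<Rightarrow> 'a \<Rightarrow> 'b::field" where
  "incidence B t = (if t \<in> B then 1 else 0)"

definition design_code :: "'a set set \<Rightarrow> ('a \<Rightarrow> 'b::field) set" where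
  "design_code Bs = {(\<lambda>t. \<Sum>B\<in>Bs. k B * incidence B t) | k. \<forall>B. k B \<in> F3}"

definition is_F3_basis :: "nat \<Rightarrow> (nat \<Rightarrow> 'a::field) \<Rightarrow> bool" where
  "is_F3_basis n \<beta> \<longleftrightarrow> (\<forall>t. \<exists>!c. (\<forall>i<n. c i \<in> F3) \<and> (\<forall>i\<ge>n. c i = 0)
                                  \<and> t = (\<Sum>i<n. c i * \<beta> i))"

definition monomials_deg :: "nat \<Rightarrow> nat \<Rightarrow> (nat \<Rightarrow> nat) set" where
  "monomials_deg n r = {e. (\<forall>i\<ge>n. e i = 0) \<and> (\<Sum>i<n. e i) \<le> r}"

definition RM :: "nat \<Rightarrow> nat \<Rightarrow> (nat \<Rightarrow> 'a::field) \<Rightarrow> ('a \<Rightarrow> 'a) set" where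
  "RM r n \<beta> = {f. \<exists>P. (\<forall>e. P e \<in> F3) \<and>
      (\<forall>c. (\<forall>i<n. c i \<in> F3) \<longrightarrow>
         f (\<Sum>i<n. c i * \<beta> i) = (\<Sum>e\<in>monomials_deg n r. P e * (\<Prod>i<n. c i ^ e i)))}"

end

theory Submission
  imports Defs "HOL-Number_Theory.Residues"
begin

text \<open>In coordinates with respect to an \<open>\<bbbF>\<^sub>3\<close>-basis, the Frobenius map \<open>t \<mapsto> t^(3^k)\<close>
  and the trace are \<open>\<bbbF>\<^sub>3\<close>-linear, so every codeword \<open>Tr(a t^(3^m + 1) + b t) + h\<close> is a
  polynomial function of degree at most 2 in the coordinates of \<open>t\<close>, with coefficients
  in \<open>\<bbbF>\<^sub>3\<close>. Since \<open>x\<^sup>2 = 1\<close> for nonzero \<open>x \<in> \<bbbF>\<^sub>3\<close>, the incidence vector of the support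
  of a codeword is its square, of degree at most 4, and \<open>\<R>\<^sub>3(4,2m)\<close> is closed under
  \<open>\<bbbF>\<^sub>3\<close>-linear combinations.\<close>

lemma CHAR_eq_3_if_card:
  assumes "card (UNIV :: 'a::{field,finite} set) = 3 ^ N"
  shows "CHAR('a) = 3"
proof -
  have "prime CHAR('a)"
    by (intro prime_CHAR_semidom finite_imp_CHAR_pos) simp
  moreover have "CHAR('a) dvd 3 ^ N"
    using CHAR_dvd_CARD[where 'a='a] assms by simp
  ultimately have "CHAR('a) dvd 3"
    using prime_dvd_power by blast
  then show ?thesis
    using \<open>prime CHAR('a)\<close> by (simp add: primes_dvd_imp_eq)
qed

lemma power_card_UNIV_eq_same:
  fixes x :: "'a::{field,finite}"
  shows "x ^ card (UNIV :: 'a set) = x"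
proof (cases "x = 0")
  case False
  let ?U = "UNIV - {0::'a}"
  have "bij_betw (\<lambda>y. x * y) ?U ?U"
    by (rule bij_betw_byWitness[where f'="\<lambda>y. y / x"]) (use False in auto)
  then have "(\<Prod>y\<in>?U. y) = (\<Prod>y\<in>?U. x * y)"
    using prod.reindex_bij_betw[of "\<lambda>y. x * y" ?U ?U "\<lambda>y. y"] by simp
  also have "\<dots> = x ^ card ?U * (\<Prod>y\<in>?U. y)"
    by (simp add: prod.distrib)
  finally have "x ^ card ?U = 1"
    by (simp add: prod_zero_iff)
  moreover have card_UNIV: "card (UNIV :: 'a set) = Suc (card ?U)"
    using finite_UNIV_card_ge_0[where 'a='a] by (simp add: card_Diff_singleton)
  ultimately show ?thesis
    by (simp only: card_UNIV power_Suc mult_1_right)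
qed (simp add: finite_UNIV_card_ge_0 power_0_left)

lemma F3_power_3_power: "x \<in> F3 \<Longrightarrow> x ^ (3 ^ k) = x"
  by (induction k) (simp_all add: F3_def power_mult)

lemma F3_add: "CHAR('a::field) = 3 \<Longrightarrow> x \<in> F3 \<Longrightarrow> y \<in> F3 \<Longrightarrow> x + y \<in> (F3 :: 'a set)"
  by (simp add: F3_def freshmans_dream)

lemma F3_mult: "x \<in> F3 \<Longrightarrow> y \<in> F3 \<Longrightarrow> x * y \<in> (F3 :: 'a::field set)"
  by (simp add: F3_def power_mult_distrib)

lemma F3_power: "x \<in> F3 \<Longrightarrow> x ^ k \<in> (F3 :: 'a::field set)"
proof -
  assume "x \<in> F3"
  then have "(x ^ k) ^ 3 = (x ^ 3) ^ k"
    by (simp flip: power_mult add: mult.commute[of k])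
  then show ?thesis
    using \<open>x \<in> F3\<close> by (simp add: F3_def)
qed

lemma F3_prod: "(\<And>i. i \<in> I \<Longrightarrow> f i \<in> F3) \<Longrightarrow> (\<Prod>i\<in>I. f i) \<in> (F3 :: 'a::field set)"
  by (simp add: F3_def prod_power_distrib)

lemma F3_square: "x \<in> (F3 :: 'a::field set) \<Longrightarrow> x * x = (if x = 0 then 0 else 1)"
proof -
  assume "x \<in> F3"
  then have "x * (x * x - 1) = 0"
    by (simp add: F3_def algebra_simps power3_eq_cube)
  then show ?thesis
    by auto
qed

lemma Tr_sum: "CHAR('a::field) = 3 \<Longrightarrow> Tr N (\<Sum>x\<in>X. f x) = (\<Sum>x\<in>X. Tr N (f x :: 'a))"
  unfolding Tr_def by (simp add: freshmans_dream_sum' sum.swap[of _ "{..<N}"])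

lemma Tr_mult_F3: "k \<in> F3 \<Longrightarrow> Tr N (x * k) = Tr N x * (k :: 'a::field)"
  unfolding Tr_def by (simp add: power_mult_distrib F3_power_3_power sum_distrib_right)

lemma Tr_in_F3:
  assumes "CHAR('a::field) = 3" and "(x :: 'a) ^ (3 ^ N) = x"
  shows "Tr N x \<in> F3"
proof -
  have "Tr N x ^ 3 = (\<Sum>i<N. (x ^ 3 ^ i) ^ 3)"
    unfolding Tr_def by (rule freshmans_dream_sum) (use assms(1) in simp_all)
  also have "\<dots> = (\<Sum>i<N. x ^ 3 ^ Suc i)"
    by (simp only: power_Suc2 power_mult)
  also have "\<dots> = (\<Sum>i<Suc N. x ^ 3 ^ i) - x"
    by (subst sum.lessThan_Suc_shift) simp
  also have "\<dots> = Tr N x"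
    using assms(2) by (simp add: Tr_def)
  finally show ?thesis
    by (simp add: F3_def)
qed

definition monomial_fun :: "nat \<Rightarrow> (nat \<Rightarrow> nat) \<Rightarrow> (nat \<Rightarrow> 'a) \<Rightarrow> 'a::field" where
  "monomial_fun n e c = (\<Prod>i<n. c i ^ e i)"

definition semiring_closed :: "'a::field set \<Rightarrow> bool" where
  "semiring_closed S \<longleftrightarrow> 0 \<in> S \<and> 1 \<in> S \<and> (\<forall>x\<in>S. \<forall>y\<in>S. x + y \<in> S \<and> x * y \<in> S)"

definition poly_fun :: "'a::field set \<Rightarrow> nat \<Rightarrow> nat \<Rightarrow> ((nat \<Rightarrow> 'a) \<Rightarrow> 'a) \<Rightarrow> bool" where
  "poly_fun S n r g \<longleftrightarrow> (\<exists>P. (\<forall>e. P e \<in> S) \<and> (\<forall>c. (\<forall>i<n. c i \<in> F3) \<longrightarrow>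
      g c = (\<Sum>e\<in>monomials_deg n r. P e * monomial_fun n e c)))"

lemma poly_funI:
  "(\<And>e. P e \<in> S) \<Longrightarrow>
   (\<And>c. \<forall>i<n. c i \<in> F3 \<Longrightarrow> g c = (\<Sum>e\<in>monomials_deg n r. P e * monomial_fun n e c)) \<Longrightarrow>
   poly_fun S n r g"
  unfolding poly_fun_def by blast

lemma semiring_closed_UNIV: "semiring_closed UNIV"
  by (simp add: semiring_closed_def)

lemma semiring_closed_F3: "CHAR('a::field) = 3 \<Longrightarrow> semiring_closed (F3 :: 'a set)"
  by (simp add: semiring_closed_def F3_add F3_mult) (simp add: F3_def)

lemma finite_monomials_deg: "finite (monomials_deg n r)"
proof (rule finite_subset)
  show "monomials_deg n r \<subseteq> {e. \<forall>i. (i \<in> {..<n} \<longrightarrow> e i \<in> {..r}) \<and> (i \<notin> {..<n} \<longrightarrow> e i = 0)}"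
  proof (intro subsetI CollectI allI conjI impI)
    fix e i assume e: "e \<in> monomials_deg n r"
    show "e i \<in> {..r}" if "i \<in> {..<n}"
    proof -
      have "e i \<le> (\<Sum>i<n. e i)"
        using that by (intro member_le_sum) auto
      then show ?thesis
        using e by (simp add: monomials_deg_def)
    qed
    show "e i = 0" if "i \<notin> {..<n}"
      using e that by (simp add: monomials_deg_def)
  qed
qed (intro finite_set_of_finite_funs; simp)

lemma monomial_fun_in_F3: "(\<And>i. i < n \<Longrightarrow> c i \<in> F3) \<Longrightarrow> monomial_fun n e c \<in> (F3 :: 'a::field set)"
  unfolding monomial_fun_def by (intro F3_prod F3_power) auto

lemma monomial_fun_add: "monomial_fun n (\<lambda>i. e i + e' i) c = monomial_fun n e c * monomial_fun n e' c"
  unfolding monomial_fun_def by (simp add: power_add prod.distrib)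

lemma poly_fun_cong:
  "poly_fun S n r g \<Longrightarrow> (\<And>c. \<forall>i<n. c i \<in> F3 \<Longrightarrow> g c = h c) \<Longrightarrow> poly_fun S n r h"
  unfolding poly_fun_def by metis

lemma poly_fun_zero: "semiring_closed S \<Longrightarrow> poly_fun S n r (\<lambda>c. 0)"
  unfolding poly_fun_def semiring_closed_def by (intro exI[of _ "\<lambda>e. 0"]) simp

lemma poly_fun_monomial:
  assumes "semiring_closed S" and "e0 \<in> monomials_deg n r"
  shows "poly_fun S n r (monomial_fun n e0)"
  unfolding poly_fun_def
proof (intro exI[of _ "\<lambda>e. if e = e0 then 1 else 0"] conjI allI impI)
  show "(if e = e0 then 1 else 0) \<in> S" for e
    using assms(1) by (simp add: semiring_closed_def)
  show "monomial_fun n e0 c = (\<Sum>e\<in>monomials_deg n r. (if e = e0 then 1 else 0) * monomial_fun n e c)"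
    for c :: "nat \<Rightarrow> 'a"
  proof -
    have "(\<Sum>e\<in>monomials_deg n r. (if e = e0 then 1 else 0) * monomial_fun n e c)
        = (\<Sum>e\<in>monomials_deg n r. if e = e0 then monomial_fun n e c else 0)"
      by (rule sum.cong) auto
    then show ?thesis
      using assms(2) by (simp add: finite_monomials_deg)
  qed
qed

lemma poly_fun_const_mult:
  assumes "semiring_closed S" and "k \<in> S" and "poly_fun S n r g"
  shows "poly_fun S n r (\<lambda>c. k * g c)"
proof -
  obtain P where "\<forall>e. P e \<in> S"
    and "\<forall>c. (\<forall>i<n. c i \<in> F3) \<longrightarrow> g c = (\<Sum>e\<in>monomials_deg n r. P e * monomial_fun n e c)"
    using assms(3) unfolding poly_fun_def by blast
  then show ?thesis
    using assms(1,2)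
    by (intro poly_funI[of "\<lambda>e. k * P e"]) (simp_all add: semiring_closed_def sum_distrib_left mult.assoc)
qed

lemma poly_fun_add:
  assumes "semiring_closed S" and "poly_fun S n r g" and "poly_fun S n r h"
  shows "poly_fun S n r (\<lambda>c. g c + h c)"
proof -
  obtain P where "\<forall>e. P e \<in> S"
    and "\<forall>c. (\<forall>i<n. c i \<in> F3) \<longrightarrow> g c = (\<Sum>e\<in>monomials_deg n r. P e * monomial_fun n e c)"
    using assms(2) unfolding poly_fun_def by blast
  moreover obtain Q where "\<forall>e. Q e \<in> S"
    and "\<forall>c. (\<forall>i<n. c i \<in> F3) \<longrightarrow> h c = (\<Sum>e\<in>monomials_deg n r. Q e * monomial_fun n e c)"
    using assms(3) unfolding poly_fun_def by blast
  ultimately show ?thesis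
    using assms(1)
    by (intro poly_funI[of "\<lambda>e. P e + Q e"]) (simp_all add: semiring_closed_def sum.distrib distrib_right)
qed

lemma poly_fun_mono:
  assumes "r \<le> r'" and "semiring_closed S" and "poly_fun S n r g"
  shows "poly_fun S n r' g"
proof -
  obtain P where P: "\<forall>e. P e \<in> S"
    and g: "\<forall>c. (\<forall>i<n. c i \<in> F3) \<longrightarrow> g c = (\<Sum>e\<in>monomials_deg n r. P e * monomial_fun n e c)"
    using assms(3) unfolding poly_fun_def by blast
  let ?P = "\<lambda>e. if e \<in> monomials_deg n r then P e else 0"
  have sub: "monomials_deg n r \<subseteq> monomials_deg n r'"
    using assms(1) by (auto simp: monomials_deg_def)
  show ?thesis
    unfolding poly_fun_def
  proof (intro exI[of _ ?P] conjI allI impI)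
    show "?P e \<in> S" for e
      using assms(2) P by (simp add: semiring_closed_def)
    fix c :: "nat \<Rightarrow> 'a" assume "\<forall>i<n. c i \<in> F3"
    moreover have "(\<Sum>e\<in>monomials_deg n r'. ?P e * monomial_fun n e c)
        = (\<Sum>e\<in>monomials_deg n r. P e * monomial_fun n e c)"
      by (rule sum.mono_neutral_cong_right) (use sub in \<open>auto simp: finite_monomials_deg\<close>)
    ultimately show "g c = (\<Sum>e\<in>monomials_deg n r'. ?P e * monomial_fun n e c)"
      using g by simp
  qed
qed

lemma poly_fun_sum:
  assumes "semiring_closed S" and "finite X" and "\<And>x. x \<in> X \<Longrightarrow> poly_fun S n r (G x)"
  shows "poly_fun S n r (\<lambda>c. \<Sum>x\<in>X. G x c)"
  using assms(2,3)
  by (induction X rule: finite_induct) (simp_all add: poly_fun_zero poly_fun_add assms(1))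

lemma poly_fun_mult:
  assumes "semiring_closed S" and "poly_fun S n r g" and "poly_fun S n s h"
  shows "poly_fun S n (r + s) (\<lambda>c. g c * h c)"
proof -
  obtain P where P: "\<forall>e. P e \<in> S"
    and g: "\<forall>c. (\<forall>i<n. c i \<in> F3) \<longrightarrow> g c = (\<Sum>e\<in>monomials_deg n r. P e * monomial_fun n e c)"
    using assms(2) unfolding poly_fun_def by blast
  obtain Q where Q: "\<forall>e. Q e \<in> S"
    and h: "\<forall>c. (\<forall>i<n. c i \<in> F3) \<longrightarrow> h c = (\<Sum>e\<in>monomials_deg n s. Q e * monomial_fun n e c)"
    using assms(3) unfolding poly_fun_def by blast
  have "poly_fun S n (r + s) (\<lambda>c. \<Sum>e\<in>monomials_deg n r. \<Sum>e'\<in>monomials_deg n s.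
      (P e * Q e') * monomial_fun n (\<lambda>i. e i + e' i) c)"
  proof (intro poly_fun_sum poly_fun_const_mult poly_fun_monomial assms(1) finite_monomials_deg)
    fix e e' assume "e \<in> monomials_deg n r" "e' \<in> monomials_deg n s"
    then show "(\<lambda>i. e i + e' i) \<in> monomials_deg n (r + s)"
      by (auto simp: monomials_deg_def sum.distrib)
    show "P e * Q e' \<in> S"
      using P Q assms(1) by (simp add: semiring_closed_def)
  qed
  then show ?thesis
    by (rule poly_fun_cong) (simp add: g h sum_product monomial_fun_add mult_ac)
qed

lemma poly_fun_const: "semiring_closed S \<Longrightarrow> k \<in> S \<Longrightarrow> poly_fun S n r (\<lambda>c. k)"
  using poly_fun_const_mult[OF _ _ poly_fun_monomial, of S k "\<lambda>_. 0" n r]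
  by (simp add: monomials_deg_def monomial_fun_def)

lemma poly_fun_coordinate: "semiring_closed S \<Longrightarrow> i < n \<Longrightarrow> poly_fun S n 1 (\<lambda>c. c i)"
proof -
  assume "semiring_closed S" and "i < n"
  then have "poly_fun S n 1 (monomial_fun n (\<lambda>j. if j = i then 1 else 0))"
    by (intro poly_fun_monomial) (simp_all add: monomials_deg_def)
  then show ?thesis
    by (rule poly_fun_cong) (simp add: monomial_fun_def if_distrib[of "\<lambda>x. _ ^ x"] \<open>i < n\<close> cong: if_cong)
qed

text \<open>Frobenius is additive and fixes monomials at \<open>\<bbbF>\<^sub>3\<close>-points, so it only acts on coefficients.\<close>
lemma poly_fun_power_3_power:
  assumes "CHAR('a::field) = 3" and "poly_fun (UNIV :: 'a set) n r g"
  shows "poly_fun UNIV n r (\<lambda>c. g c ^ (3 ^ k))"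
proof -
  obtain P where g: "\<forall>c. (\<forall>i<n. c i \<in> F3) \<longrightarrow> g c = (\<Sum>e\<in>monomials_deg n r. P e * monomial_fun n e c)"
    using assms(2) unfolding poly_fun_def by blast
  show ?thesis
    unfolding poly_fun_def
    using assms(1)
    by (intro exI[of _ "\<lambda>e. P e ^ (3 ^ k)"])
      (simp add: g freshmans_dream_sum' power_mult_distrib F3_power_3_power monomial_fun_in_F3)
qed

lemma poly_fun_Tr:
  assumes "CHAR('a::field) = 3" and "\<forall>x::'a. x ^ (3 ^ N) = x" and "poly_fun (UNIV :: 'a set) n r g"
  shows "poly_fun F3 n r (\<lambda>c. Tr N (g c))"
proof -
  obtain P where g: "\<forall>c. (\<forall>i<n. c i \<in> F3) \<longrightarrow> g c = (\<Sum>e\<in>monomials_deg n r. P e * monomial_fun n e c)"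
    using assms(3) unfolding poly_fun_def by blast
  show ?thesis
    unfolding poly_fun_def
    using assms(1,2)
    by (intro exI[of _ "\<lambda>e. Tr N (P e)"])
      (simp add: g Tr_sum Tr_mult_F3 Tr_in_F3 monomial_fun_in_F3)
qed

lemma poly_fun_coord_sum: "poly_fun (UNIV :: 'a::field set) n 1 (\<lambda>c. \<Sum>i<n. c i * \<beta> i)"
proof -
  have "poly_fun (UNIV :: 'a set) n 1 (\<lambda>c. \<Sum>i<n. \<beta> i * c i)"
    by (intro poly_fun_sum semiring_closed_UNIV poly_fun_const_mult poly_fun_coordinate) auto
  then show ?thesis
    by (simp add: mult.commute)
qed

lemma poly_fun_Tr_quadratic:
  fixes \<beta> :: "nat \<Rightarrow> 'a::field" and n :: nat
  assumes "CHAR('a) = 3" and "\<forall>x::'a. x ^ (3 ^ N) = x" and "h \<in> F3"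
  defines "T \<equiv> \<lambda>c. \<Sum>i<n. c i * \<beta> i"
  shows "poly_fun F3 n 2 (\<lambda>c. Tr N (a * T c ^ (3 ^ k + 1) + b * T c) + h)"
proof -
  have T: "poly_fun UNIV n 1 T"
    unfolding T_def by (rule poly_fun_coord_sum)
  have "poly_fun UNIV n 2 (\<lambda>c. T c ^ (3 ^ k) * T c)"
    using poly_fun_mult[OF semiring_closed_UNIV poly_fun_power_3_power[OF assms(1) T, where k=k] T]
    by (simp add: numeral_2_eq_2)
  moreover have "poly_fun UNIV n 2 (\<lambda>c. b * T c)"
    by (intro poly_fun_mono[of 1 2] semiring_closed_UNIV poly_fun_const_mult T) simp_all
  ultimately have "poly_fun UNIV n 2 (\<lambda>c. a * (T c ^ (3 ^ k) * T c) + b * T c)"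
    by (rule poly_fun_add[OF semiring_closed_UNIV poly_fun_const_mult[OF semiring_closed_UNIV UNIV_I]])
  then have "poly_fun UNIV n 2 (\<lambda>c. a * T c ^ (3 ^ k + 1) + b * T c)"
    by (rule poly_fun_cong) (simp add: power_add)
  then have "poly_fun F3 n 2 (\<lambda>c. Tr N (a * T c ^ (3 ^ k + 1) + b * T c))"
    by (rule poly_fun_Tr[OF assms(1,2)])
  then show ?thesis
    using assms(1,3) by (intro poly_fun_add semiring_closed_F3 poly_fun_const)
qed

lemma codeC_in_F3:
  fixes f :: "'a::field \<Rightarrow> 'a"
  assumes "CHAR('a) = 3" and "\<forall>x::'a. x ^ (3 ^ (2 * m)) = x" and "f \<in> codeC m"
  shows "f t \<in> F3"
proof -
  obtain a b h where "f = (\<lambda>t. Tr (2 * m) (a * t ^ (3 ^ m + 1) + b * t) + h)" and "h \<in> F3"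
    using assms(3) unfolding codeC_def by blast
  then show ?thesis
    using assms(1,2) by (auto intro!: F3_add Tr_in_F3)
qed

lemma poly_fun_nonzero_indicator:
  assumes "CHAR('a::field) = 3" and "poly_fun (F3 :: 'a set) n r g"
    and "\<And>c. \<forall>i<n. c i \<in> F3 \<Longrightarrow> g c \<in> F3"
  shows "poly_fun F3 n (2 * r) (\<lambda>c. if g c \<noteq> 0 then 1 else 0)"
proof -
  have "poly_fun F3 n (r + r) (\<lambda>c. g c * g c)"
    using assms(1,2) by (intro poly_fun_mult semiring_closed_F3)
  then have "poly_fun F3 n (2 * r) (\<lambda>c. g c * g c)"
    by (simp add: mult_2)
  then show ?thesis
    by (rule poly_fun_cong) (simp add: F3_square assms(3))
qed

lemma RM_iff_poly_fun: "f \<in> RM r n \<beta> \<longleftrightarrow> poly_fun F3 n r (\<lambda>c. f (\<Sum>i<n. c i * \<beta> i))"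
  by (simp add: RM_def poly_fun_def monomial_fun_def)

lemma incidence_supp_codeC_in_RM:
  fixes f :: "'a::field \<Rightarrow> 'a"
  assumes "CHAR('a) = 3" and "\<forall>x::'a. x ^ (3 ^ (2 * m)) = x" and "f \<in> codeC m"
  shows "incidence (supp f) \<in> RM 4 (2 * m) \<beta>"
proof -
  obtain a b h where f: "f = (\<lambda>t. Tr (2 * m) (a * t ^ (3 ^ m + 1) + b * t) + h)" and "h \<in> F3"
    using assms(3) unfolding codeC_def by blast
  have "poly_fun F3 (2 * m) 2 (\<lambda>c. f (\<Sum>i<2 * m. c i * \<beta> i))"
    unfolding f by (rule poly_fun_Tr_quadratic[OF assms(1,2) \<open>h \<in> F3\<close>])
  then have "poly_fun F3 (2 * m) (2 * 2) (\<lambda>c. if f (\<Sum>i<2 * m. c i * \<beta> i) \<noteq> 0 then 1 else 0)"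
    using codeC_in_F3[OF assms] by (intro poly_fun_nonzero_indicator[OF assms(1)])
  then show ?thesis
    by (simp add: RM_iff_poly_fun incidence_def supp_def)
qed

lemma design_code_subset_RM:
  fixes Bs :: "'a::field set set" and \<beta> :: "nat \<Rightarrow> 'a"
  assumes "CHAR('a) = 3" and "finite Bs" and "\<And>B. B \<in> Bs \<Longrightarrow> incidence B \<in> RM r n \<beta>"
  shows "design_code Bs \<subseteq> RM r n \<beta>"
proof
  fix f :: "'a \<Rightarrow> 'a" assume "f \<in> design_code Bs"
  then obtain k where f: "f = (\<lambda>t. \<Sum>B\<in>Bs. k B * incidence B t)" and "\<forall>B. k B \<in> F3"
    unfolding design_code_def by blast
  then have "poly_fun F3 n r (\<lambda>c. \<Sum>B\<in>Bs. k B * incidence B (\<Sum>i<n. c i * \<beta> i))"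
    using assms by (intro poly_fun_sum poly_fun_const_mult semiring_closed_F3)
      (simp_all add: RM_iff_poly_fun)
  then show "f \<in> RM r n \<beta>"
    by (simp add: f RM_iff_poly_fun)
qed

theorem mainTheorem3:
  fixes m :: nat and \<beta> :: "nat \<Rightarrow> 'a::{field,finite}"
  assumes "m \<ge> 2"
    and "card (UNIV :: 'a set) = 3 ^ (2 * m)"
    and "is_F3_basis (2 * m) \<beta>"
  shows "design_code (blocks (codeC m :: ('a \<Rightarrow> 'a) set)) \<subseteq> RM 4 (2 * m) \<beta>"
proof (rule design_code_subset_RM)
  show char: "CHAR('a) = 3"
    using assms(2) by (rule CHAR_eq_3_if_card)
  have "\<forall>x::'a. x ^ (3 ^ (2 * m)) = x"
    using power_card_UNIV_eq_same assms(2) by metis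
  then show "incidence B \<in> RM 4 (2 * m) \<beta>" if "B \<in> blocks (codeC m :: ('a \<Rightarrow> 'a) set)" for B
    using that incidence_supp_codeC_in_RM[OF char] unfolding blocks_def by blast
qed simp

end
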